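(* Consider $N$ independent channels, each a two-state Markov chain with common transition matrix $\mathbf{P}$, and let $i\in\{1,2\}$. There is a constant $C_i(\mathbf{P})$, depending only on $\mathbf{P}$ and the policy $\pi_i$, such that for any initial belief vector $\Omega(1)$ and any positive integer $M$, $$\Big|\mathbb{E}^{\pi_i}\Big[\sum_{t=1}^{M}Y^{\pi_i}(\mathbf{P},\Omega(1),t)\Big]-M\cdot U_i(\mathbf{P})\Big|<C_i(\mathbf{P}).$$
   Context: Time is slotted. The state $S_k(t)\in\{0,1\}$ of channel $k$ evolves as a two-state Markov chain with transition matrix $\mathbf{P}=(p_{xy})$, $p_{xy}=\Pr(S_k(t+1)=y\mid S_k(t)=x)$, independently across channels. In each slot a user senses one channel, observes its state, and receives reward equal to that state. $\Omega(1)=[\omega_1(1),\dots,\omega_N(1)]$ is the initial belief vector, $\omega_k(1)=\Pr(S_k(1)=1)$. $Y^{\pi}(\mathbf{P},\Omega(1),t)$ denotes the reward at time $t$ under policy $\pi$. Policies: a circular order $\kappa=(n_1,\dots,n_N)$ is identified with its cyclic shifts; $-\kappa$ is the reversed order and $k^+_\kappa$ the channel following $k$ in $\kappa$. Let $\kappa(1)=(n_1,\dots,n_N)$ with $\omega_{n_1}(1)\le\cdots\le\omega_{n_N}(1)$ and $\hat a(1)=\arg\max_k\omega_k(1)$. Policy $\pi_1$: for $t>1$, $\hat a(t)=\hat a(t-1)$ if $S_{\hat a(t-1)}(t-1)=1$, else $\hat a(t)=\hat a(t-1)^+_{\kappa(1)}$. Policy $\pi_2$: for $t>1$, $\hat a(t)=\hat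 a(t-1)$ if $S_{\hat a(t-1)}(t-1)=0$, else $\hat a(t)=\hat a(t-1)^+_{\kappa(t)}$, where $\kappa(t)=\kappa(1)$ for odd $t$ and $\kappa(t)=-\kappa(1)$ for even $t$. $U_i(\mathbf{P})=\lim_{T\to\infty}\frac1T\mathbb{E}^{\pi_i}\big[\sum_{t=1}^T Y^{\pi_i}(\mathbf{P},\Omega(1),t)\big]$ is the steady-state average expected reward of $\pi_i$; this limit exists and does not depend on $\Omega(1)$. *)

theory Defs
  imports "HOL-Probability.Probability"
begin

(* Channels are indexed 0..N-1; a channel state vector is s :: nat => bool
   (True = state 1, False = state 0), with s k = False for k >= N.
   The transition matrix P is P x y = Pr(S(t+1)=y | S(t)=x), x,y in {0,1}. *)

definition stochastic2 :: "(nat \<Rightarrow> nat \<Rightarrow> real) \<Rightarrow> bool" where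
  "stochastic2 P \<longleftrightarrow> (\<forall>x\<in>{0,1}. (\<forall>y\<in>{0,1}. 0 \<le> P x y) \<and> P x 0 + P x 1 = 1)"

definition valid_belief :: "nat \<Rightarrow> (nat \<Rightarrow> real) \<Rightarrow> bool" where
  "valid_belief N \<omega> \<longleftrightarrow> (\<forall>k<N. 0 \<le> \<omega> k \<and> \<omega> k \<le> 1)"

definition valid_order :: "nat \<Rightarrow> (nat \<Rightarrow> real) \<Rightarrow> nat list \<Rightarrow> bool" where
  "valid_order N \<omega> ord \<longleftrightarrow> distinct ord \<and> set ord = {..<N} \<and> sorted (map \<omega> ord)"

definition pos :: "nat list \<Rightarrow> nat \<Rightarrow> nat" where
  "pos ord k = (THE j. j < length ord \<and> ord ! j = k)"

definition cnext :: "nat list \<Rightarrow> nat \<Rightarrow> nat" where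
  "cnext ord k = ord ! ((pos ord k + 1) mod length ord)"

definition cprev :: "nat list \<Rightarrow> nat \<Rightarrow> nat" where
  "cprev ord k = ord ! ((pos ord k + length ord - 1) mod length ord)"

(* channel sensed at time t (t > 1) by policy pi_i, given the channel a sensed
   at time t-1 and its observed state obs = S_a(t-1) *)
definition policy_next :: "nat \<Rightarrow> nat list \<Rightarrow> nat \<Rightarrow> bool \<Rightarrow> nat \<Rightarrow> nat" where
  "policy_next i ord t obs a =
     (if i = 1 then (if obs then a else cnext ord a)
      else (if \<not> obs then a else (if odd t then cnext ord a else cprev ord a)))"

definition init_states :: "nat \<Rightarrow> (nat \<Rightarrow> real) \<Rightarrow> (nat \<Rightarrow> bool) pmf" where
  "init_states N \<omega> = Pi_pmf {..<N} False (\<lambda>k. bernoulli_pmf (\<omega> k))"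

definition trans_states :: "(nat \<Rightarrow> nat \<Rightarrow> real) \<Rightarrow> nat \<Rightarrow> (nat \<Rightarrow> bool) \<Rightarrow> (nat \<Rightarrow> bool) pmf" where
  "trans_states P N s = Pi_pmf {..<N} False
     (\<lambda>k. bernoulli_pmf (if s k then P 1 1 else P 0 1))"

(* joint distribution of (channel states S(t), sensed channel a(t)) at time t = n+1 *)
fun sys_dist :: "nat \<Rightarrow> (nat \<Rightarrow> nat \<Rightarrow> real) \<Rightarrow> nat \<Rightarrow> (nat \<Rightarrow> real) \<Rightarrow> nat list \<Rightarrow> nat
                  \<Rightarrow> nat \<Rightarrow> ((nat \<Rightarrow> bool) \<times> nat) pmf" where
  "sys_dist i P N \<omega> ord a1 0 = map_pmf (\<lambda>s. (s, a1)) (init_states N \<omega>)"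
| "sys_dist i P N \<omega> ord a1 (Suc n) =
     bind_pmf (sys_dist i P N \<omega> ord a1 n)
       (\<lambda>(s, a). map_pmf (\<lambda>s'. (s', policy_next i ord (n + 2) (s a) a)) (trans_states P N s))"

definition exp_reward :: "nat \<Rightarrow> (nat \<Rightarrow> nat \<Rightarrow> real) \<Rightarrow> nat \<Rightarrow> (nat \<Rightarrow> real) \<Rightarrow> nat list \<Rightarrow> nat
                  \<Rightarrow> nat \<Rightarrow> real" where
  "exp_reward i P N \<omega> ord a1 M =
     (\<Sum>n<M. measure_pmf.expectation (sys_dist i P N \<omega> ord a1 n)
                (\<lambda>(s, a). if s a then 1 else 0))"

definition avg_reward :: "nat \<Rightarrow> (nat \<Rightarrow> nat \<Rightarrow> real) \<Rightarrow> nat \<Rightarrow> (nat \<Rightarrow> real) \<Rightarrow> nat list \<Rightarrow> nat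
                  \<Rightarrow> real" where
  "avg_reward i P N \<omega> ord a1 = lim (\<lambda>T. exp_reward i P N \<omega> ord a1 T / real T)"

end

theory Submission
  imports Defs "HOL-Library.Function_Algebras"
begin

text \<open>The pair (channel states, sensed channel) is a Markov chain on a finite state space whose
  transition kernel depends on the time slot only through its parity, so its two-step kernel \<open>T\<close>
  is time homogeneous.  As a Markov operator, \<open>T\<close> is linear and non-expansive for the sup norm,
  hence power bounded, which rules out Jordan blocks at the eigenvalue 1: every function \<open>g\<close> on
  the state space splits as \<open>g = v + T w - w\<close> with \<open>T v = v\<close>.  Taking for \<open>g\<close> the expected reward
  of two consecutive slots, the reward of slots \<open>2j+1, 2j+2\<close> is \<open>c + d (j+1) - d j\<close> with \<open>c\<close>
  constant and \<open>d\<close> bounded, so the partial sums telescope to \<open>M c / 2 + O(1)\<close>.  This gives both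
  \<open>U = c / 2\<close> and the uniform bound, which depends on the circular order only through \<open>T\<close>;
  there are finitely many orders.\<close>

section \<open>Non-expansive linear operators on finitely supported functions\<close>

lemma sum_fun_apply: "(sum F A) x = (\<Sum>a\<in>A. F a x)"
  by (induction A rule: infinite_finite_induct) auto

lemma family_dependent_if_finite_support:
  fixes f :: "nat \<Rightarrow> 'x \<Rightarrow> real"
  assumes X: "finite X" and supp: "\<And>j x. x \<notin> X \<Longrightarrow> f j x = 0"
  shows "\<exists>c. (\<exists>j\<le>card X. c j \<noteq> 0) \<and> (\<forall>x. (\<Sum>j\<le>card X. c j * f j x) = 0)"
proof (cases "inj_on f {..card X}")
  case True
  interpret fv: vector_space "\<lambda>(c::real) (g::'x\<Rightarrow>real) x. c * g x"
    by unfold_locales (auto simp: fun_eq_iff algebra_simps)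
  define \<delta> :: "'x \<Rightarrow> 'x \<Rightarrow> real" where "\<delta> y = (\<lambda>x. if y = x then 1 else 0)" for y
  define F where "F = f ` {..card X}"
  have F_span: "F \<subseteq> fv.span (\<delta> ` X)"
  proof
    fix g assume "g \<in> F"
    then obtain j where g: "g = f j"
      by (auto simp: F_def)
    have "f j = (\<Sum>y\<in>X. (\<lambda>x. f j y * \<delta> y x))"
    proof
      fix x
      have "(\<Sum>y\<in>X. f j y * \<delta> y x) = (\<Sum>y\<in>X. if y = x then f j y else 0)"
        by (rule sum.cong) (auto simp: \<delta>_def)
      also have "\<dots> = (if x \<in> X then f j x else 0)"
        using sum.delta[OF X, of x "f j"] by (simp add: eq_commute)
      finally show "f j x = (\<Sum>y\<in>X. (\<lambda>x. f j y * \<delta> y x)) x"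
        using supp by (auto simp: sum_fun_apply)
    qed
    also have "\<dots> \<in> fv.span (\<delta> ` X)"
      by (intro fv.span_sum fv.span_scale fv.span_base) auto
    finally show "g \<in> fv.span (\<delta> ` X)"
      using g by simp
  qed
  have "fv.dependent F"
  proof (rule ccontr)
    assume "\<not> fv.dependent F"
    then have "card F \<le> card (\<delta> ` X)"
      using fv.independent_span_bound[OF finite_imageI[OF X] _ F_span] by blast
    also have "\<dots> \<le> card X"
      by (rule card_image_le[OF X])
    finally show False
      using True by (simp add: F_def card_image)
  qed
  then obtain u where u_nonzero: "\<exists>v\<in>F. u v \<noteq> 0" and u_sum: "(\<Sum>v\<in>F. (\<lambda>x. u v * v x)) = 0"
    using fv.dependent_finite[of F] unfolding F_def by blast
  have "(\<Sum>j\<le>card X. u (f j) * f j x) = 0" for x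
    using fun_cong[OF u_sum, of x] True by (simp add: F_def sum.reindex sum_fun_apply)
  moreover have "\<exists>j\<le>card X. u (f j) \<noteq> 0"
    using u_nonzero unfolding F_def by blast
  ultimately show ?thesis
    by (intro exI[of _ "\<lambda>j. u (f j)"]) simp
next
  case False
  then obtain j k where jk: "j \<le> card X" "k \<le> card X" "j \<noteq> k" "f j = f k"
    unfolding inj_on_def by auto
  define c where "c l = (if l = j then 1 else if l = k then -1 else 0 :: real)" for l
  have "(\<Sum>l\<le>card X. c l * f l x) = 0" for x
  proof -
    have "(\<Sum>l\<le>card X. c l * f l x)
        = (\<Sum>l\<le>card X. (if l = j then f j x else 0) - (if l = k then f k x else 0))"
      by (rule sum.cong) (auto simp: c_def jk(3))
    also have "\<dots> = 0"
      using jk by (simp add: sum_subtractf)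
    finally show ?thesis .
  qed
  moreover have "c j \<noteq> 0"
    by (simp add: c_def)
  ultimately show ?thesis
    using jk(1) by (intro exI[of _ c]) auto
qed

locale nonexpansive_operator =
  fixes T :: "('x \<Rightarrow> real) \<Rightarrow> 'x \<Rightarrow> real" and X :: "'x set"
  assumes finite_X: "finite X"
    and T_outside: "\<And>g x. x \<notin> X \<Longrightarrow> T g x = 0"
    and T_add: "\<And>g h. T (\<lambda>x. g x + h x) = (\<lambda>x. T g x + T h x)"
    and T_scale: "\<And>c g. T (\<lambda>x. c * g x) = (\<lambda>x. c * T g x)"
    and T_nonexpansive: "\<And>g b x. \<forall>y\<in>X. \<bar>g y\<bar> \<le> b \<Longrightarrow> x \<in> X \<Longrightarrow> \<bar>T g x\<bar> \<le> b"
begin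

definition supported :: "('x \<Rightarrow> real) \<Rightarrow> bool" where
  "supported g \<longleftrightarrow> (\<forall>x. x \<notin> X \<longrightarrow> g x = 0)"

definition D :: "('x \<Rightarrow> real) \<Rightarrow> 'x \<Rightarrow> real" where
  "D g = (\<lambda>x. T g x - g x)"

lemma T_zero: "T (\<lambda>x. 0) = (\<lambda>x. 0)"
  using T_scale[of 0 "\<lambda>x. 0"] by simp

lemma T_diff: "T (\<lambda>x. g x - h x) = (\<lambda>x. T g x - T h x)"
  using T_add[of g "\<lambda>x. (-1) * h x"] T_scale[of "-1" h] by simp

lemma T_sum: "T (\<lambda>x. \<Sum>k\<in>K. c k * h k x) = (\<lambda>x. \<Sum>k\<in>K. c k * T (h k) x)"
  by (induction K rule: infinite_finite_induct) (simp_all add: T_zero T_add T_scale)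

lemma Tpow_add: "(T^^n) (\<lambda>x. g x + h x) = (\<lambda>x. (T^^n) g x + (T^^n) h x)"
  by (induction n) (simp_all add: T_add)

lemma Tpow_diff: "(T^^n) (\<lambda>x. g x - h x) = (\<lambda>x. (T^^n) g x - (T^^n) h x)"
  by (induction n) (simp_all add: T_diff)

lemma Tpow_fixed: "T v = v \<Longrightarrow> (T^^n) v = v"
  by (induction n) simp_all

lemma Tpow_nonexpansive: "\<forall>y\<in>X. \<bar>g y\<bar> \<le> b \<Longrightarrow> x \<in> X \<Longrightarrow> \<bar>(T^^n) g x\<bar> \<le> b"
  by (induction n arbitrary: x) (simp_all add: T_nonexpansive)

lemma D_diff: "D (\<lambda>x. g x - h x) = (\<lambda>x. D g x - D h x)"
  by (simp add: D_def T_diff fun_eq_iff)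

lemma D_sum: "D (\<lambda>x. \<Sum>k\<in>K. c k * h k x) = (\<lambda>x. \<Sum>k\<in>K. c k * D (h k) x)"
  by (simp add: D_def T_sum sum_subtractf right_diff_distrib)

lemma Dpow_diff: "(D^^n) (\<lambda>x. g x - h x) = (\<lambda>x. (D^^n) g x - (D^^n) h x)"
  by (induction n) (simp_all add: D_diff)

lemma Dpow_sum: "(D^^n) (\<lambda>x. \<Sum>k\<in>K. c k * h k x) = (\<lambda>x. \<Sum>k\<in>K. c k * (D^^n) (h k) x)"
  by (induction n) (simp_all add: D_sum)

lemma supported_D: "supported g \<Longrightarrow> supported (D g)"
  by (simp add: supported_def D_def T_outside)

lemma supported_Dpow: "supported g \<Longrightarrow> supported ((D^^n) g)"
  by (induction n) (simp_all add: supported_D)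

lemma abs_le_sum_abs:
  fixes u :: "'x \<Rightarrow> real"
  shows "y \<in> X \<Longrightarrow> \<bar>u y\<bar> \<le> (\<Sum>y\<in>X. \<bar>u y\<bar>)"
  using member_le_sum[of y X "\<lambda>y. \<bar>u y\<bar>"] finite_X by simp

text \<open>If \<open>D (D u) = 0\<close> then \<open>T\<^sup>n u = u + n D u\<close>, which stays bounded only if \<open>D u = 0\<close>:
  a non-expansive operator has no Jordan block of size two at the eigenvalue 1.\<close>
lemma D_eq_zero_if_D_D_eq_zero:
  assumes u: "supported u" and DD: "D (D u) = (\<lambda>x. 0)"
  shows "D u = (\<lambda>x. 0)"
proof
  fix x
  have T_Du: "T (D u) = D u"
    using DD by (simp add: D_def[of "D u"] fun_eq_iff)
  have Tpow_u: "(T^^n) u = (\<lambda>x. u x + real n * D u x)" for n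
  proof (induction n)
    case (Suc n)
    have "(T^^Suc n) u = (\<lambda>x. T u x + real n * D u x)"
      using Suc by (simp add: T_add T_scale T_Du)
    then show ?case
      by (simp add: D_def algebra_simps)
  qed simp
  define b where "b = (\<Sum>y\<in>X. \<bar>u y\<bar>)"
  have u_le: "\<forall>y\<in>X. \<bar>u y\<bar> \<le> b"
    unfolding b_def using abs_le_sum_abs by blast
  show "D u x = 0"
  proof (cases "x \<in> X")
    case False
    then show ?thesis
      using supported_D[OF u] by (simp add: supported_def)
  next
    case True
    have n_bound: "real n * \<bar>D u x\<bar> \<le> 2 * b" for n
    proof -
      have "\<bar>u x + real n * D u x\<bar> \<le> b"
        using Tpow_nonexpansive[OF u_le True, of n] by (simp add: Tpow_u)
      moreover have "\<bar>u x\<bar> \<le> b"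
        using u_le True by blast
      ultimately show ?thesis
        by (simp add: abs_mult)
    qed
    show ?thesis
    proof (rule ccontr)
      assume "D u x \<noteq> 0"
      moreover obtain n :: nat where "2 * b / \<bar>D u x\<bar> < real n"
        using reals_Archimedean2 by blast
      ultimately have "2 * b < real n * \<bar>D u x\<bar>"
        by (simp add: field_simps)
      then show False
        using n_bound[of n] by linarith
    qed
  qed
qed

lemma D_eq_zero_if_Dpow_eq_zero:
  "supported z \<Longrightarrow> (D^^n) z = (\<lambda>x. 0) \<Longrightarrow> D z = (\<lambda>x. 0)"
proof (induction n arbitrary: z)
  case 0
  then show ?case
    by (simp add: D_def T_zero)
next
  case (Suc n)
  have "(D^^n) (D z) = (\<lambda>x. 0)"
    using Suc.prems(2) by (simp add: funpow_Suc_right del: funpow.simps)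
  then have "D (D z) = (\<lambda>x. 0)"
    using Suc.IH supported_D[OF Suc.prems(1)] by blast
  then show ?case
    using D_eq_zero_if_D_D_eq_zero Suc.prems(1) by blast
qed

text \<open>\<open>g, D g, \<dots>, D\<^bsup>|X|\<^esup> g\<close> are linearly dependent; dividing a relation by its lowest
  nonzero coefficient \<open>c\<^sub>r\<close> writes \<open>D\<^sup>r g\<close> as \<open>D\<^bsup>r+1\<^esup>\<close> of a combination of the others.\<close>
lemma Dpow_eq_Dpow_Suc:
  assumes g: "supported g"
  shows "\<exists>r h. supported h \<and> (D^^r) g = (D^^Suc r) h"
proof -
  define m where "m = card X"
  obtain c where c_nonzero: "\<exists>j\<le>m. c j \<noteq> 0" and c_rel: "\<And>x. (\<Sum>j\<le>m. c j * (D^^j) g x) = 0"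
    using family_dependent_if_finite_support[OF finite_X, of "\<lambda>j. (D^^j) g"]
      supported_Dpow[OF g] unfolding m_def supported_def by blast
  define r where "r = (LEAST j. c j \<noteq> 0)"
  have c_r: "c r \<noteq> 0" and r_le: "r \<le> m" and c_below: "\<And>j. j < r \<Longrightarrow> c j = 0"
    using c_nonzero LeastI_ex[of "\<lambda>j. c j \<noteq> 0"] Least_le[of "\<lambda>j. c j \<noteq> 0"]
      not_less_Least[of _ "\<lambda>j. c j \<noteq> 0"] unfolding r_def by (blast dest: le_trans)+
  define h where "h = (\<lambda>x. \<Sum>j\<in>{Suc r..m}. (- c j / c r) * (D^^(j - Suc r)) g x)"
  have "supported h"
    using supported_Dpow[OF g] by (simp add: h_def supported_def)
  moreover have "(D^^Suc r) h = (D^^r) g"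
  proof
    fix x
    have "(D^^Suc r) ((D^^(j - Suc r)) g) = (D^^j) g" if "j \<in> {Suc r..m}" for j
      using funpow_add[of "Suc r" "j - Suc r" D] that by (simp del: funpow.simps)
    then have "(D^^Suc r) h x = (\<Sum>j\<in>{Suc r..m}. (- c j / c r) * (D^^j) g x)"
      unfolding h_def Dpow_sum by simp
    also have "\<dots> = - (\<Sum>j\<in>{Suc r..m}. c j * (D^^j) g x) / c r"
      unfolding sum_divide_distrib sum_negf[symmetric] by (rule sum.cong) auto
    also have "(\<Sum>j\<in>{Suc r..m}. c j * (D^^j) g x) = - c r * (D^^r) g x"
    proof -
      have "0 = (\<Sum>j\<in>{r..m}. c j * (D^^j) g x)"
        unfolding c_rel[of x, symmetric] using c_below
        by (intro sum.mono_neutral_right) auto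
      also have "\<dots> = c r * (D^^r) g x + (\<Sum>j\<in>{Suc r..m}. c j * (D^^j) g x)"
        using r_le by (simp add: sum.atLeast_Suc_atMost)
      finally show ?thesis
        by linarith
    qed
    finally show "(D^^Suc r) h x = (D^^r) g x"
      using c_r by simp
  qed
  ultimately show ?thesis
    by metis
qed

lemma fixed_plus_coboundary:
  assumes g: "supported g"
  shows "\<exists>v w. T v = v \<and> g = (\<lambda>x. v x + T w x - w x)"
proof -
  obtain r h where h: "supported h" and Dr: "(D^^r) g = (D^^Suc r) h"
    using Dpow_eq_Dpow_Suc[OF g] by blast
  define z where "z = (\<lambda>x. g x - D h x)"
  have "supported z"
    using g supported_D[OF h] by (simp add: z_def supported_def)
  moreover have "(D^^r) z = (\<lambda>x. 0)"
    using Dr by (simp add: z_def Dpow_diff funpow_Suc_right del: funpow.simps)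
  ultimately have "D z = (\<lambda>x. 0)"
    by (rule D_eq_zero_if_Dpow_eq_zero)
  then have "T z = z"
    by (simp add: D_def fun_eq_iff)
  moreover have "g = (\<lambda>x. z x + T h x - h x)"
    by (simp add: z_def D_def)
  ultimately show ?thesis
    by blast
qed

end

section \<open>Averages of sequences with telescoping pair sums\<close>

lemma sum_pairs_deviation_le:
  fixes y d :: "nat \<Rightarrow> real"
  assumes y_le: "\<And>n. \<bar>y n\<bar> \<le> 1"
    and pairs: "\<And>j. y (2 * j) + y (Suc (2 * j)) = c + d (Suc j) - d j"
    and d_le: "\<And>j. \<bar>d j\<bar> \<le> W"
  shows "\<bar>(\<Sum>n<M. y n) - real M * (c / 2)\<bar> \<le> 2 * W + \<bar>c\<bar> / 2 + 1"
proof -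
  have even_sum: "(\<Sum>n<2 * m. y n) = real m * c + d m - d 0" for m
  proof (induction m)
    case (Suc m)
    have "(\<Sum>n<2 * Suc m. y n) = (\<Sum>n<2 * m. y n) + (y (2 * m) + y (Suc (2 * m)))"
      by simp
    then show ?case
      using Suc.IH pairs[of m] by (simp add: distrib_right)
  qed simp
  have d_diff: "\<bar>d m - d 0\<bar> \<le> 2 * W" for m
    using d_le[of m] d_le[of 0] by linarith
  define m where "m = M div 2"
  have "M = 2 * m \<or> M = Suc (2 * m)"
    unfolding m_def by presburger
  then show ?thesis
  proof
    assume "M = 2 * m"
    then show ?thesis
      using d_diff[of m] by (simp add: even_sum)
  next
    assume "M = Suc (2 * m)"
    then have "(\<Sum>n<M. y n) = real m * c + d m - d 0 + y (2 * m)"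
      by (simp add: even_sum)
    moreover have "real M * (c / 2) = real m * c + c / 2"
      using \<open>M = Suc (2 * m)\<close> by (simp add: field_simps)
    ultimately have "(\<Sum>n<M. y n) - real M * (c / 2) = (d m - d 0) + y (2 * m) - c / 2"
      by linarith
    then show ?thesis
      using d_diff[of m] y_le[of "2 * m"] by (simp only: abs_le_iff) linarith
  qed
qed

lemma average_tendsto_if_bounded_deviation:
  fixes S :: "nat \<Rightarrow> real"
  assumes S_le: "\<And>M. \<bar>S M - real M * a\<bar> \<le> K"
  shows "(\<lambda>M. S M / real M) \<longlonglongrightarrow> a"
proof -
  have "(\<lambda>M. (S M - real M * a) / real M) \<longlonglongrightarrow> 0"
  proof (rule Lim_null_comparison)
    show "\<forall>\<^sub>F M in sequentially. norm ((S M - real M * a) / real M) \<le> K / real M"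
      by (intro always_eventually allI) (simp add: abs_divide divide_right_mono S_le)
  qed (rule lim_const_over_n)
  then have "(\<lambda>M. (S M - real M * a) / real M + a) \<longlonglongrightarrow> 0 + a"
    by (intro tendsto_add tendsto_const)
  moreover have "\<forall>\<^sub>F M in sequentially. (S M - real M * a) / real M + a = S M / real M"
    by (rule eventually_sequentiallyI[of 1]) (simp add: field_simps)
  ultimately show ?thesis
    by (simp add: Lim_transform_eventually)
qed

section \<open>Expectations on a finite state space\<close>

text \<open>Expectation as a finite sum over a superset of the support, so that linearity and
  Fubini need no integrability side conditions.\<close>
definition expect_on :: "'x set \<Rightarrow> 'x pmf \<Rightarrow> ('x \<Rightarrow> real) \<Rightarrow> real" where
  "expect_on X p g = (\<Sum>x\<in>X. pmf p x * g x)"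

lemma expectation_eq_expect_on:
  assumes "finite X" "set_pmf p \<subseteq> X"
  shows "measure_pmf.expectation p g = expect_on X p g"
  unfolding expect_on_def using assms
  by (subst integral_measure_pmf_real[of X]) (auto simp: mult.commute)

lemma expect_on_bind:
  assumes X: "finite X" and p: "set_pmf p \<subseteq> X" and q: "\<And>x. x \<in> X \<Longrightarrow> set_pmf (q x) \<subseteq> X"
  shows "expect_on X (bind_pmf p q) g = expect_on X p (\<lambda>x. expect_on X (q x) g)"
proof -
  have pmf_bind_sum: "pmf (bind_pmf p q) y = (\<Sum>x\<in>X. pmf p x * pmf (q x) y)" for y
    unfolding pmf_bind using expectation_eq_expect_on[OF X p] by (simp add: expect_on_def)
  have "expect_on X (bind_pmf p q) g = (\<Sum>y\<in>X. \<Sum>x\<in>X. pmf p x * pmf (q x) y * g y)"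
    unfolding expect_on_def pmf_bind_sum by (simp add: sum_distrib_right)
  also have "\<dots> = (\<Sum>x\<in>X. \<Sum>y\<in>X. pmf p x * (pmf (q x) y * g y))"
    by (subst sum.swap) (simp add: mult.assoc)
  also have "\<dots> = expect_on X p (\<lambda>x. expect_on X (q x) g)"
    unfolding expect_on_def by (simp add: sum_distrib_left)
  finally show ?thesis .
qed

lemma expect_on_cong: "(\<And>x. x \<in> X \<Longrightarrow> g x = h x) \<Longrightarrow> expect_on X p g = expect_on X p h"
  unfolding expect_on_def by (rule sum.cong) auto

lemma expect_on_add: "expect_on X p (\<lambda>x. g x + h x) = expect_on X p g + expect_on X p h"
  unfolding expect_on_def by (simp add: algebra_simps sum.distrib)

lemma expect_on_diff: "expect_on X p (\<lambda>x. g x - h x) = expect_on X p g - expect_on X p h"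
  unfolding expect_on_def by (simp add: algebra_simps sum_subtractf)

lemma expect_on_scale: "expect_on X p (\<lambda>x. c * g x) = c * expect_on X p g"
  unfolding expect_on_def by (simp add: algebra_simps sum_distrib_left)

lemma abs_expect_on_le:
  assumes X: "finite X" and p: "set_pmf p \<subseteq> X" and g_le: "\<forall>y\<in>X. \<bar>g y\<bar> \<le> b"
  shows "\<bar>expect_on X p g\<bar> \<le> b"
proof -
  have "\<bar>expect_on X p g\<bar> \<le> (\<Sum>x\<in>X. pmf p x * \<bar>g x\<bar>)"
    unfolding expect_on_def using sum_abs[of "\<lambda>x. pmf p x * g x" X] by (simp add: abs_mult)
  also have "\<dots> \<le> (\<Sum>x\<in>X. pmf p x * b)"
    using g_le by (intro sum_mono mult_left_mono) auto
  also have "\<dots> = b"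
    using sum_pmf_eq_1[OF X p] by (simp add: sum_distrib_right[symmetric])
  finally show ?thesis .
qed

section \<open>The channel-sensing chain\<close>

definition channel_states :: "nat \<Rightarrow> (nat \<Rightarrow> bool) set" where
  "channel_states N = {s. \<forall>k\<ge>N. \<not> s k}"

lemma finite_channel_states: "finite (channel_states N)"
proof (rule finite_subset)
  show "channel_states N \<subseteq> (\<lambda>A k. k \<in> A) ` Pow {..<N}"
  proof
    fix s assume "s \<in> channel_states N"
    then have "{k. s k} \<in> Pow {..<N}"
      by (auto simp: channel_states_def not_le[symmetric])
    then show "s \<in> (\<lambda>A k. k \<in> A) ` Pow {..<N}"
      by (intro image_eqI[of _ _ "{k. s k}"]) auto
  qed
qed simp

lemma set_Pi_pmf_subset_channel_states: "set_pmf (Pi_pmf {..<N} False p) \<subseteq> channel_states N"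
  using set_Pi_pmf_subset[of "{..<N}" False p] by (auto simp: channel_states_def)

locale channel_system =
  fixes i :: nat and P :: "nat \<Rightarrow> nat \<Rightarrow> real" and N :: nat and ord :: "nat list"
  assumes distinct_ord: "distinct ord" and set_ord: "set ord = {..<N}" and N_pos: "N \<ge> 1"
begin

abbreviation X :: "((nat \<Rightarrow> bool) \<times> nat) set" where
  "X \<equiv> channel_states N \<times> {..<N}"

text \<open>\<open>step t\<close> is the transition from slot \<open>t - 1\<close> into slot \<open>t\<close>.\<close>
definition step :: "nat \<Rightarrow> (nat \<Rightarrow> bool) \<times> nat \<Rightarrow> ((nat \<Rightarrow> bool) \<times> nat) pmf" where
  "step t = (\<lambda>(s, a). map_pmf (\<lambda>s'. (s', policy_next i ord t (s a) a)) (trans_states P N s))"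

definition kernel :: "nat \<Rightarrow> ((nat \<Rightarrow> bool) \<times> nat \<Rightarrow> real) \<Rightarrow> (nat \<Rightarrow> bool) \<times> nat \<Rightarrow> real" where
  "kernel t g = (\<lambda>x. if x \<in> X then expect_on X (step t x) g else 0)"

definition two_step :: "((nat \<Rightarrow> bool) \<times> nat \<Rightarrow> real) \<Rightarrow> (nat \<Rightarrow> bool) \<times> nat \<Rightarrow> real" where
  "two_step g = kernel 2 (kernel 3 g)"

lemma finite_sys_space: "finite X"
  by (simp add: finite_channel_states)

lemma policy_next_less: "a < N \<Longrightarrow> policy_next i ord t b a < N"
proof -
  have length_ord: "length ord = N"
    using distinct_card[OF distinct_ord] set_ord by simp
  have "ord ! (j mod N) < N" for j
    using nth_mem[of "j mod N" ord] length_ord N_pos set_ord by auto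
  then show "policy_next i ord t b a < N" if "a < N"
    using that by (auto simp: policy_next_def cnext_def cprev_def length_ord)
qed

lemma set_step: "x \<in> X \<Longrightarrow> set_pmf (step t x) \<subseteq> X"
  using set_Pi_pmf_subset_channel_states policy_next_less
  by (auto simp: step_def trans_states_def split: prod.splits)

lemma step_parity:
  assumes "odd t = odd t'"
  shows "step t = step t'"
proof -
  have "policy_next i ord t = policy_next i ord t'"
    using assms by (simp add: policy_next_def fun_eq_iff)
  then show ?thesis
    unfolding step_def by simp
qed

lemma kernel_parity: "odd t = odd t' \<Longrightarrow> kernel t = kernel t'"
  unfolding kernel_def by (metis step_parity)

lemma kernel_add: "kernel t (\<lambda>x. g x + h x) = (\<lambda>x. kernel t g x + kernel t h x)"
  by (simp add: kernel_def expect_on_add fun_eq_iff)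

lemma kernel_scale: "kernel t (\<lambda>x. c * g x) = (\<lambda>x. c * kernel t g x)"
  by (simp add: kernel_def expect_on_scale fun_eq_iff)

lemma sys_dist_Suc:
  "sys_dist i P N \<omega> ord a1 (Suc n) = bind_pmf (sys_dist i P N \<omega> ord a1 n) (step (n + 2))"
  by (simp add: step_def)

lemma set_sys_dist: "a1 < N \<Longrightarrow> set_pmf (sys_dist i P N \<omega> ord a1 n) \<subseteq> X"
proof (induction n)
  case 0
  then show ?case
    using set_Pi_pmf_subset_channel_states by (auto simp: init_states_def)
next
  case (Suc n)
  then show ?case
    using set_step unfolding sys_dist_Suc set_bind_pmf by blast
qed

sublocale nonexpansive_operator two_step X
proof
  have kernel_nonexpansive: "\<bar>kernel t g x\<bar> \<le> b" if "\<forall>y\<in>X. \<bar>g y\<bar> \<le> b" "x \<in> X" for t g b x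
    using abs_expect_on_le[OF finite_sys_space set_step] that by (simp add: kernel_def)
  show "\<bar>two_step g x\<bar> \<le> b" if "\<forall>y\<in>X. \<bar>g y\<bar> \<le> b" "x \<in> X" for g b x
    unfolding two_step_def using that by (blast intro: kernel_nonexpansive)
qed (simp_all add: finite_sys_space two_step_def kernel_add kernel_scale, simp add: kernel_def)

abbreviation E :: "(nat \<Rightarrow> real) \<Rightarrow> nat \<Rightarrow> nat \<Rightarrow> ((nat \<Rightarrow> bool) \<times> nat \<Rightarrow> real) \<Rightarrow> real" where
  "E \<omega> a1 n \<equiv> expect_on X (sys_dist i P N \<omega> ord a1 n)"

lemma E_Suc:
  assumes "a1 < N"
  shows "E \<omega> a1 (Suc n) g = E \<omega> a1 n (kernel (n + 2) g)"
proof -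
  have "E \<omega> a1 (Suc n) g = E \<omega> a1 n (\<lambda>x. expect_on X (step (n + 2) x) g)"
    unfolding sys_dist_Suc by (rule expect_on_bind[OF finite_sys_space set_sys_dist[OF assms] set_step])
  also have "\<dots> = E \<omega> a1 n (kernel (n + 2) g)"
    by (rule expect_on_cong) (simp add: kernel_def)
  finally show ?thesis .
qed

lemma E_even:
  assumes "a1 < N"
  shows "E \<omega> a1 (2 * m) g = E \<omega> a1 0 ((two_step^^m) g)"
proof (induction m arbitrary: g)
  case (Suc m)
  have "E \<omega> a1 (2 * Suc m) g = E \<omega> a1 (Suc (Suc (2 * m))) g"
    by simp
  also have "\<dots> = E \<omega> a1 (2 * m) (kernel (2 * m + 2) (kernel (Suc (2 * m) + 2) g))"
    by (simp only: E_Suc[OF assms])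
  also have "\<dots> = E \<omega> a1 (2 * m) (two_step g)"
    using kernel_parity[of "2 * m + 2" 2] kernel_parity[of "Suc (2 * m) + 2" 3]
    by (simp add: two_step_def)
  also have "\<dots> = E \<omega> a1 0 ((two_step^^Suc m) g)"
    by (simp add: Suc.IH funpow_Suc_right del: funpow.simps)
  finally show ?case .
qed simp

definition reward :: "(nat \<Rightarrow> bool) \<times> nat \<Rightarrow> real" where
  "reward = (\<lambda>(s, a). if s a then 1 else 0)"

definition pair_reward :: "(nat \<Rightarrow> bool) \<times> nat \<Rightarrow> real" where
  "pair_reward = (\<lambda>x. if x \<in> X then reward x + kernel 2 reward x else 0)"

lemma E_pair_reward:
  assumes "a1 < N"
  shows "E \<omega> a1 (2 * j) reward + E \<omega> a1 (Suc (2 * j)) reward = E \<omega> a1 0 ((two_step^^j) pair_reward)"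
proof -
  have "E \<omega> a1 (Suc (2 * j)) reward = E \<omega> a1 (2 * j) (kernel 2 reward)"
    using E_Suc[OF assms] kernel_parity[of "2 * j + 2" 2] by simp
  then have "E \<omega> a1 (2 * j) reward + E \<omega> a1 (Suc (2 * j)) reward = E \<omega> a1 (2 * j) pair_reward"
    by (simp add: expect_on_add[symmetric] pair_reward_def cong: expect_on_cong)
  then show ?thesis
    by (simp add: E_even[OF assms])
qed

lemma reward_deviation_bounded:
  "\<exists>C. \<forall>\<omega> a1 M. a1 < N \<longrightarrow>
     \<bar>exp_reward i P N \<omega> ord a1 M - real M * avg_reward i P N \<omega> ord a1\<bar> < C"
proof -
  have "supported pair_reward"
    by (simp add: supported_def pair_reward_def)
  then obtain v w where v_fixed: "two_step v = v"
    and pair_reward_eq: "pair_reward = (\<lambda>x. v x + two_step w x - w x)"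
    using fixed_plus_coboundary by blast
  define V where "V = (\<Sum>y\<in>X. \<bar>v y\<bar>)"
  define W where "W = (\<Sum>y\<in>X. \<bar>w y\<bar>)"
  have "\<bar>exp_reward i P N \<omega> ord a1 M - real M * avg_reward i P N \<omega> ord a1\<bar> < 2 * W + V + 2"
    if a1: "a1 < N" for \<omega> a1 M
  proof -
    have E_le: "\<bar>E \<omega> a1 0 ((two_step^^j) u)\<bar> \<le> (\<Sum>y\<in>X. \<bar>u y\<bar>)" for j u
      using abs_le_sum_abs
      by (intro abs_expect_on_le[OF finite_sys_space set_sys_dist[OF a1]] ballI Tpow_nonexpansive) auto
    define c where "c = E \<omega> a1 0 v"
    define d where "d j = E \<omega> a1 0 ((two_step^^j) w)" for j
    have exp_reward_eq: "exp_reward i P N \<omega> ord a1 = (\<lambda>M. \<Sum>n<M. E \<omega> a1 n reward)"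
      unfolding exp_reward_def reward_def
      by (simp add: expectation_eq_expect_on[OF finite_sys_space set_sys_dist[OF a1]])
    have pair_reward_pow:
      "(two_step^^j) pair_reward = (\<lambda>x. v x + (two_step^^Suc j) w x - (two_step^^j) w x)" for j
      unfolding pair_reward_eq
      by (simp add: Tpow_diff Tpow_add Tpow_fixed[OF v_fixed] funpow_Suc_right del: funpow.simps)
    have pairs: "E \<omega> a1 (2 * j) reward + E \<omega> a1 (Suc (2 * j)) reward = c + d (Suc j) - d j" for j
      unfolding E_pair_reward[OF a1] pair_reward_pow c_def d_def
      by (simp only: expect_on_add expect_on_diff)
    have y_le: "\<bar>E \<omega> a1 n reward\<bar> \<le> 1" for n
      by (rule abs_expect_on_le[OF finite_sys_space set_sys_dist[OF a1]]) (simp add: reward_def)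
    have d_le: "\<bar>d j\<bar> \<le> W" for j
      unfolding d_def W_def by (rule E_le)
    have c_le: "\<bar>c\<bar> \<le> V"
      using E_le[of 0 v] by (simp add: c_def V_def)
    have deviation: "\<bar>exp_reward i P N \<omega> ord a1 M - real M * (c / 2)\<bar> \<le> 2 * W + \<bar>c\<bar> / 2 + 1" for M
      unfolding exp_reward_eq using y_le pairs d_le by (rule sum_pairs_deviation_le)
    then have avg: "avg_reward i P N \<omega> ord a1 = c / 2"
      unfolding avg_reward_def by (intro limI average_tendsto_if_bounded_deviation)
    show ?thesis
      unfolding avg using deviation[of M] c_le abs_ge_zero[of c] by linarith
  qed
  then show ?thesis
    by blast
qed

end

theorem lemma2:
  fixes P :: "nat \<Rightarrow> nat \<Rightarrow> real" and N :: nat and i :: nat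
  assumes "stochastic2 P" and "N \<ge> 1" and "i \<in> {1, 2}"
  shows "\<exists>C. \<forall>\<omega> ord a1 M.
           valid_belief N \<omega> \<and> valid_order N \<omega> ord \<and> a1 < N \<and> (\<forall>k<N. \<omega> k \<le> \<omega> a1) \<and> M \<ge> 1
           \<longrightarrow> \<bar>exp_reward i P N \<omega> ord a1 M - real M * avg_reward i P N \<omega> ord a1\<bar> < C"
proof -
  define orders where "orders = {ord. distinct ord \<and> set ord = {..<N}}"
  have "finite orders"
    by (rule finite_subset[OF _ finite_subset_distinct[of "{..<N}"]]) (auto simp: orders_def)
  have "\<forall>ord\<in>orders. \<exists>C. \<forall>\<omega> a1 M. a1 < N \<longrightarrow>
      \<bar>exp_reward i P N \<omega> ord a1 M - real M * avg_reward i P N \<omega> ord a1\<bar> < C"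
    using channel_system.reward_deviation_bounded assms(2)
    by (auto simp: orders_def channel_system_def)
  then obtain C where C: "\<forall>ord\<in>orders. \<forall>\<omega> a1 M. a1 < N \<longrightarrow>
      \<bar>exp_reward i P N \<omega> ord a1 M - real M * avg_reward i P N \<omega> ord a1\<bar> < C ord"
    by (metis bchoice)
  show ?thesis
  proof (intro exI allI impI)
    fix \<omega> :: "nat \<Rightarrow> real" and ord :: "nat list" and a1 M :: nat
    assume "valid_belief N \<omega> \<and> valid_order N \<omega> ord \<and> a1 < N \<and> (\<forall>k<N. \<omega> k \<le> \<omega> a1) \<and> M \<ge> 1"
    then have "ord \<in> orders" and "a1 < N"
      by (auto simp: valid_order_def orders_def)
    then have "\<bar>exp_reward i P N \<omega> ord a1 M - real M * avg_reward i P N \<omega> ord a1\<bar> < C ord"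
      using C by blast
    also have "C ord \<le> (\<Sum>q\<in>orders. \<bar>C q\<bar>)"
      using member_le_sum[OF \<open>ord \<in> orders\<close>, of "\<lambda>q. \<bar>C q\<bar>"] \<open>finite orders\<close> by simp
    finally show "\<bar>exp_reward i P N \<omega> ord a1 M - real M * avg_reward i P N \<omega> ord a1\<bar>
        < (\<Sum>q\<in>orders. \<bar>C q\<bar>)" .
  qed
qed

end
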